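(* Let $d\ge 2$, set $b:=2^d$ and $Q:=[0,1]^d$, and let $(x_n)_{n\ge1}\subset Q$ be the dyadic digital sequence defined below. For every $N\in\mathbb{N}$ there exist pairwise disjoint Borel sets $A_1,\dots,A_N\subset Q$ such that \[ \lambda_d(A_n)=\frac1N,\qquad A_n\subset B\bigl(x_n,6\sqrt d\,N^{-1/d}\bigr)\qquad(1\le n\le N), \] and $\lambda_d\bigl(Q\setminus\bigcup_{n=1}^N A_n\bigr)=0$.
   Context: $\lambda_d$ denotes Lebesgue measure on $Q=[0,1]^d$ (a probability measure), and $B(x,r)$ is the closed Euclidean ball of radius $r$ centred at $x$. Dyadic digital sequence: for $a\in\{0,1,\dots,b-1\}$ write $a=\sum_{j=1}^d\varepsilon_j(a)2^{j-1}$ with $\varepsilon_j(a)\in\{0,1\}$; for an integer $m\ge0$ write its base-$b$ expansion $m=\sum_{k\ge0}a_k(m)b^k$ with $a_k(m)\in\{0,\dots,b-1\}$, all but finitely many zero. Then \[ x_n:=\Bigl(\sum_{k=0}^\infty\varepsilon_1(a_k(n-1))2^{-(k+1)},\ \dots,\ \sum_{k=0}^\infty\varepsilon_d(a_k(n-1))2^{-(k+1)}\Bigr),\qquad n\ge1. \] *)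

theory Defs
  imports "HOL-Analysis.Analysis"
begin

definition digit :: "nat \<Rightarrow> nat \<Rightarrow> nat \<Rightarrow> nat" where
  "digit b k m = (m div b ^ k) mod b"

definition bitj :: "nat \<Rightarrow> nat \<Rightarrow> nat" where
  "bitj j a = (a div 2 ^ (j - 1)) mod 2"

text \<open>j-th coordinate (1 <= j <= d) of the n-th point (n >= 1) of the dyadic digital sequence in dimension d.\<close>
definition dyadic_coord :: "nat \<Rightarrow> nat \<Rightarrow> nat \<Rightarrow> real" where
  "dyadic_coord d j n = (\<Sum>k. real (bitj j (digit (2 ^ d) k (n - 1))) / 2 ^ (k + 1))"

text \<open>The n-th point, where the coordinate i of the type 'n is the idx(i)-th coordinate.\<close>
definition dyadic_point :: "nat \<Rightarrow> ('n::finite \<Rightarrow> nat) \<Rightarrow> nat \<Rightarrow> real ^ 'n" where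
  "dyadic_point d idx n = (\<chi> i. dyadic_coord d (idx i) n)"

end

theory Submission
  imports Defs
begin

text \<open>Index the points by c = n - 1 < N and cut the cube recursively. At level i every
  cell holds the indices of one residue class modulo 2^i; it is cut perpendicular to axis
  i mod d into two boxes whose volumes are proportional to the numbers of indices of the two
  residue classes modulo 2^(i+1) it contains, and bit i of c selects the box of c. Once
  N \<le> 2^T, after T levels every cell holds a single index and has volume 1/N; cells of
  different indices are separated by the cut at their first differing bit.

  Bit i of c is binary digit i div d + 1 of coordinate i mod d of x_(c+1), so x_(c+1) lies
  in the dyadic box obtained by halving at every cut instead. While a cell holds at least
  eight indices, its proportions are 1/2 up to a relative error of order 2^i/N. These
  errors grow geometrically with the level, so along each axis the cell still agrees with
  the dyadic box up to O(N^(-1/d)) at the last cut where it holds about eight indices, and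
  at that level both have side of order N^(-1/d).\<close>

section \<open>Residue classes modulo powers of two\<close>

lemma mod_pow2_Suc: "(c::nat) mod 2^Suc i = c mod 2^i + 2^i * (c div 2^i mod 2)"
  unfolding power_Suc2 mod_mult2_eq by simp

lemma mod_pow2_Suc_eq_iff:
  fixes c c' :: nat
  shows "c mod 2^Suc i = c' mod 2^Suc i \<longleftrightarrow>
    c mod 2^i = c' mod 2^i \<and> c div 2^i mod 2 = c' div 2^i mod 2"
proof -
  have "x mod 2^Suc i mod 2^i = x mod 2^i \<and> x mod 2^Suc i div 2^i = x div 2^i mod 2" for x :: nat
    unfolding mod_pow2_Suc[of x i] by simp
  then show ?thesis using mod_pow2_Suc[of c i] mod_pow2_Suc[of c' i] by metis
qed

lemma first_differing_bit:
  fixes c c' :: nat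
  assumes "c \<noteq> c'" "c < 2^T" "c' < 2^T"
  obtains i where "i < T" "c mod 2^i = c' mod 2^i" "odd (c div 2^i) \<noteq> odd (c' div 2^i)"
proof -
  have "c mod 2^T \<noteq> c' mod 2^T" using assms by simp
  then obtain i where i: "c mod 2^i = c' mod 2^i" "c mod 2^Suc i \<noteq> c' mod 2^Suc i"
    using exists_least_lemma[of "\<lambda>i. c mod 2^i \<noteq> c' mod 2^i"] by auto
  have "i < T"
  proof (rule ccontr)
    assume "\<not> i < T"
    then have "(2::nat)^T \<le> 2^i" by (simp add: power_increasing)
    then have "c < 2^i" "c' < 2^i" using assms by linarith+
    then show False using i(1) \<open>c \<noteq> c'\<close> by simp
  qed
  moreover have "odd (c div 2^i) \<noteq> odd (c' div 2^i)"
    using i unfolding mod_pow2_Suc_eq_iff by (auto simp: odd_iff_mod_2_eq_one)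
  ultimately show ?thesis using that i(1) by blast
qed

lemma halving_error:
  fixes n :: nat
  shows "\<bar>2 * real ((n + 1) div 2) - n\<bar> \<le> 1" "\<bar>2 * real (n div 2) - n\<bar> \<le> 1"
proof -
  have "2 * ((n + 1) div 2) \<le> n + 1 \<and> n \<le> 2 * ((n + 1) div 2)"
    and "2 * (n div 2) \<le> n \<and> n \<le> 2 * (n div 2) + 1" by presburger+
  then show "\<bar>2 * real ((n + 1) div 2) - n\<bar> \<le> 1" "\<bar>2 * real (n div 2) - n\<bar> \<le> 1"
    by (simp_all add: abs_le_iff flip: of_nat_le_iff)
qed

text \<open>The number of m < N with m congruent to c modulo 2^i, i.e. the ceiling of
  (N - c mod 2^i) / 2^i.\<close>
definition residue_count :: "nat \<Rightarrow> nat \<Rightarrow> nat \<Rightarrow> nat" where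
  "residue_count N i c = (N + 2^i - 1 - c mod 2^i) div 2^i"

lemma residue_count_mod [simp]: "residue_count N i (c mod 2^i) = residue_count N i c"
  by (simp add: residue_count_def)

lemma residue_count_0 [simp]: "residue_count N 0 c = N"
  by (simp add: residue_count_def)

lemma residue_count_Suc:
  "residue_count N (Suc i) c =
     (if odd (c div 2^i) then residue_count N i c div 2 else (residue_count N i c + 1) div 2)"
proof -
  define M where "M = N + 2^i - 1 - c mod 2^i"
  have r: "c mod 2^i < 2^i" by simp
  have numerator: "N + 2^Suc i - 1 - c mod 2^Suc i = (if odd (c div 2^i) then M else M + 2^i)"
  proof (cases "odd (c div 2^i)")
    case True
    then have "c mod 2^Suc i = c mod 2^i + 2^i"
      using mod_pow2_Suc[of c i] by (simp add: odd_iff_mod_2_eq_one)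
    then show ?thesis using True r by (simp add: M_def)
  next
    case False
    then have "c mod 2^Suc i = c mod 2^i"
      using mod_pow2_Suc[of c i] by (simp add: even_iff_mod_2_eq_zero)
    then show ?thesis using False r by (simp add: M_def; arith)
  qed
  moreover have "M div 2^Suc i = M div 2^i div 2"
    by (simp only: power_Suc2 div_mult2_eq)
  moreover have "(M + 2^i) div 2^Suc i = (M div 2^i + 1) div 2"
    by (simp only: power_Suc2 div_mult2_eq) simp
  ultimately show ?thesis
    unfolding residue_count_def numerator M_def[symmetric] by simp
qed

lemma residue_count_Suc_mod: "residue_count N (Suc i) (c mod 2^i) = (residue_count N i c + 1) div 2"
  by (subst residue_count_Suc) simp

lemma residue_count_Suc_le: "residue_count N (Suc i) c \<le> residue_count N i c"
proof -
  have "\<forall>n::nat. n div 2 \<le> n \<and> (n + 1) div 2 \<le> n" by presburger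
  then show ?thesis by (simp add: residue_count_Suc)
qed

lemma residue_count_pos:
  assumes "c < N"
  shows "0 < residue_count N i c"
proof -
  have "c mod 2^i \<le> c" by simp
  then have "2^i \<le> N + 2^i - 1 - c mod 2^i" using assms by linarith
  then show ?thesis by (simp add: residue_count_def div_greater_zero_iff)
qed

lemma residue_count_lower: "N < (residue_count N i c + 1) * 2^i"
proof -
  define M where "M = N + 2^i - 1 - c mod 2^i"
  have "c mod 2^i < 2^i" by simp
  then have "N \<le> M" unfolding M_def by linarith
  also have "M < (M div 2^i + 1) * 2^i"
  proof -
    have "M mod 2^i < 2^i" "(M div 2^i + 1) * 2^i = M div 2^i * 2^i + 2^i" by simp_all
    then show ?thesis using div_mult_mod_eq[of M "2^i"] by linarith
  qed
  finally show ?thesis by (simp add: residue_count_def M_def)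
qed

lemma residue_count_large:
  assumes "8 * 2^i \<le> N"
  shows "8 \<le> residue_count N i c" and "1 / real (residue_count N i c) \<le> 8/7 * 2^i / real N"
proof -
  define n where "n = residue_count N i c"
  have "N < (n + 1) * 2^i" unfolding n_def by (rule residue_count_lower)
  then have "8 * 2^i < (n + 1) * 2^i" "8 * N < 8 * (n * 2^i) + 8 * 2^i"
    using assms by (linarith, simp add: algebra_simps)
  then have "8 \<le> n" and "7 * N \<le> 8 * n * 2^i"
    using assms by (simp, linarith)
  then show "8 \<le> n" by simp
  have "(0::nat) < 8 * 2^i" by simp
  then have "0 < N" using assms by linarith
  moreover have "real (7 * N) \<le> real (8 * n * 2^i)"
    using \<open>7 * N \<le> 8 * n * 2^i\<close> by (simp only: of_nat_le_iff)
  ultimately show "1 / real n \<le> 8/7 * 2^i / real N"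
    using \<open>8 \<le> n\<close> by (simp add: field_simps)
qed

lemma residue_count_eq_1:
  assumes "c < N" "N \<le> 2^T"
  shows "residue_count N T c = 1"
proof -
  have "c mod 2^T = c" using assms by simp
  moreover have "(N + 2^T - 1 - c) div 2^T = 1" by (rule div_nat_eqI) (use assms in auto)
  ultimately show ?thesis by (simp add: residue_count_def)
qed

section \<open>The splitting tree\<close>

text \<open>Lower corner and side length along axis j < d of the cell of index c at level i. Passing
  to level i + 1 the cell is cut perpendicular to axis i mod d at split_point, in the
  proportion of the counts of its two children; c goes to the upper part iff bit i of c is set.\<close>
primrec cell_len :: "nat \<Rightarrow> nat \<Rightarrow> nat \<Rightarrow> nat \<Rightarrow> nat \<Rightarrow> real" where
  "cell_len d N c 0 j = 1"
| "cell_len d N c (Suc i) j =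
     (if j = i mod d then cell_len d N c i j * residue_count N (Suc i) c / residue_count N i c
      else cell_len d N c i j)"

primrec cell_low :: "nat \<Rightarrow> nat \<Rightarrow> nat \<Rightarrow> nat \<Rightarrow> nat \<Rightarrow> real" where
  "cell_low d N c 0 j = 0"
| "cell_low d N c (Suc i) j =
     (if j = i mod d \<and> odd (c div 2^i)
      then cell_low d N c i j
        + cell_len d N c i j * residue_count N (Suc i) (c mod 2^i) / residue_count N i c
      else cell_low d N c i j)"

definition split_point :: "nat \<Rightarrow> nat \<Rightarrow> nat \<Rightarrow> nat \<Rightarrow> real" where
  "split_point d N c i = cell_low d N c i (i mod d)
     + cell_len d N c i (i mod d) * residue_count N (Suc i) (c mod 2^i) / residue_count N i c"

lemma cell_len_nonneg: "0 \<le> cell_len d N c i j"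
  by (induction i) auto

lemma cell_mod_cong:
  assumes "c mod 2^i = c' mod 2^i"
  shows "cell_len d N c i = cell_len d N c' i \<and> cell_low d N c i = cell_low d N c' i"
  using assms
proof (induction i)
  case 0
  show ?case by simp
next
  case (Suc i)
  have mod_i: "c mod 2^i = c' mod 2^i" and "odd (c div 2^i) \<longleftrightarrow> odd (c' div 2^i)"
    using Suc.prems unfolding mod_pow2_Suc_eq_iff by (simp_all add: odd_iff_mod_2_eq_one)
  moreover have "residue_count N (Suc i) c = residue_count N (Suc i) c'"
    and "residue_count N i c = residue_count N i c'"
    by (metis Suc.prems residue_count_mod, metis mod_i residue_count_mod)
  ultimately show ?case
    using Suc.IH by (auto simp: fun_eq_iff residue_count_Suc_mod)
qed

lemma split_point_mod_cong:
  assumes "c mod 2^i = c' mod 2^i"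
  shows "split_point d N c i = split_point d N c' i"
proof -
  have "residue_count N i c = residue_count N i c'" by (metis assms residue_count_mod)
  then show ?thesis
    using cell_mod_cong[OF assms] by (simp add: split_point_def residue_count_Suc_mod)
qed

lemma split_point_bounds:
  assumes "c < N"
  shows "cell_low d N c i (i mod d) \<le> split_point d N c i"
    and "split_point d N c i \<le> cell_low d N c i (i mod d) + cell_len d N c i (i mod d)"
proof -
  define n l where "n = residue_count N i c" and "l = cell_len d N c i (i mod d)"
  have "0 < n" using residue_count_pos[OF assms] by (simp add: n_def)
  then have "(n + 1) div 2 \<le> n" by presburger
  then have "real ((n + 1) div 2) / n \<le> 1" using \<open>0 < n\<close> by simp
  moreover have "0 \<le> l" unfolding l_def by (rule cell_len_nonneg)
  ultimately have "0 \<le> l * (real ((n + 1) div 2) / n)" "l * (real ((n + 1) div 2) / n) \<le> l"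
    using mult_left_mono[of "real ((n + 1) div 2) / n" 1 l] by simp_all
  then show "cell_low d N c i (i mod d) \<le> split_point d N c i"
    and "split_point d N c i \<le> cell_low d N c i (i mod d) + l"
    by (simp_all add: split_point_def residue_count_Suc_mod n_def[symmetric] l_def[symmetric])
qed

lemma cell_Suc_axis:
  assumes "c < N"
  shows "cell_low d N c (Suc i) (i mod d) =
           (if odd (c div 2^i) then split_point d N c i else cell_low d N c i (i mod d))"
    and "cell_low d N c (Suc i) (i mod d) + cell_len d N c (Suc i) (i mod d) =
           (if odd (c div 2^i) then cell_low d N c i (i mod d) + cell_len d N c i (i mod d)
            else split_point d N c i)"
proof -
  define n where "n = residue_count N i c"
  define l where "l = cell_len d N c i (i mod d)"
  have "0 < n" using residue_count_pos[OF assms] by (simp add: n_def)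
  have "(n + 1) div 2 + n div 2 = n" by presburger
  then have halves: "real ((n + 1) div 2) + real (n div 2) = real n" by (metis of_nat_add)
  show "cell_low d N c (Suc i) (i mod d) =
           (if odd (c div 2^i) then split_point d N c i else cell_low d N c i (i mod d))"
    by (simp add: split_point_def)
  show "cell_low d N c (Suc i) (i mod d) + cell_len d N c (Suc i) (i mod d) =
           (if odd (c div 2^i) then cell_low d N c i (i mod d) + l else split_point d N c i)"
  proof (cases "odd (c div 2^i)")
    case True
    have "l * ((n + 1) div 2) / n + l * (n div 2) / n = l * ((real ((n + 1) div 2) + (n div 2)) / n)"
      by (simp add: add_divide_distrib distrib_left)
    also have "\<dots> = l" using halves \<open>0 < n\<close> by simp
    finally show ?thesis
      using True by (simp add: residue_count_Suc residue_count_Suc_mod n_def[symmetric] l_def[symmetric])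
  next
    case False
    then show ?thesis
      by (simp add: split_point_def residue_count_Suc residue_count_Suc_mod n_def[symmetric] l_def[symmetric])
  qed
qed

lemma cell_Suc_nested:
  assumes "c < N"
  shows "cell_low d N c i j \<le> cell_low d N c (Suc i) j"
    and "cell_low d N c (Suc i) j + cell_len d N c (Suc i) j \<le> cell_low d N c i j + cell_len d N c i j"
  using cell_Suc_axis[OF assms, of d i] split_point_bounds[OF assms, of d i]
  by (cases "j = i mod d"; simp)+

lemma cell_nested:
  assumes "c < N" "i \<le> i'"
  shows "cell_low d N c i j \<le> cell_low d N c i' j \<and>
    cell_low d N c i' j + cell_len d N c i' j \<le> cell_low d N c i j + cell_len d N c i j"
  using assms(2)
proof (induction i' rule: dec_induct)
  case base
  show ?case by simp
next
  case (step i')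
  then show ?case using cell_Suc_nested[OF assms(1), of d i' j] by linarith
qed

lemma cell_len_prod:
  assumes "0 < d" "0 < N"
  shows "(\<Prod>j<d. cell_len d N c i j) = residue_count N i c / N"
proof (induction i)
  case 0
  show ?case using assms by simp
next
  case (Suc i)
  define r where "r = real (residue_count N (Suc i) c) / residue_count N i c"
  have "(\<Prod>j<d. cell_len d N c (Suc i) j) = (\<Prod>j<d. (if j = i mod d then r else 1) * cell_len d N c i j)"
    by (intro prod.cong) (auto simp: r_def)
  also have "\<dots> = r * (\<Prod>j<d. cell_len d N c i j)"
    using assms by (simp add: prod.distrib prod.delta)
  finally show ?case
    using Suc.IH residue_count_Suc_le[of N i c] by (cases "residue_count N i c = 0") (auto simp: r_def)
qed

section \<open>The cells\<close>

lemma idx_axis: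
  assumes "bij_betw idx UNIV {1..d}"
  shows "bij_betw (\<lambda>k. idx k - 1) UNIV {..<d}" and "idx k = Suc (idx k - 1)" and "idx k - 1 < d"
proof -
  have "bij_betw (\<lambda>x. x - 1) {1..d} {..<d}"
    by (rule bij_betwI[where g = Suc]) auto
  then show "bij_betw (\<lambda>k. idx k - 1) UNIV {..<d}"
    using bij_betw_trans[OF assms] by (simp add: comp_def)
  have "idx k \<in> {1..d}" using bij_betwE[OF assms] by blast
  then show "idx k = Suc (idx k - 1)" and "idx k - 1 < d" by auto
qed

text \<open>Coordinate k of the type real^'n plays the role of axis idx k - 1.\<close>
definition cell :: "nat \<Rightarrow> nat \<Rightarrow> nat \<Rightarrow> ('n::finite \<Rightarrow> nat) \<Rightarrow> nat \<Rightarrow> (real^'n) set" where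
  "cell d N T idx c = {y \<in> cbox 0 1. \<forall>i<T. \<forall>k. idx k = Suc (i mod d) \<longrightarrow>
     (if odd (c div 2^i) then split_point d N c i \<le> y$k else y$k < split_point d N c i)}"

lemma cell_borel: "cell d N T idx c \<in> sets borel"
proof -
  have "cell d N T idx c = {y \<in> space borel. y \<in> cbox 0 1 \<and> (\<forall>i<T. \<forall>k. idx k = Suc (i mod d) \<longrightarrow>
     (if odd (c div 2^i) then split_point d N c i \<le> y$k else y$k < split_point d N c i))}"
    by (simp add: cell_def)
  also have "\<dots> \<in> sets borel"
    by measurable
  finally show ?thesis .
qed

lemma cell_subset_cube: "cell d N T idx c \<subseteq> cbox 0 1"
  by (auto simp: cell_def)

lemma cell_coord_bounds:
  assumes "y \<in> cell d N T idx c" "i \<le> T" "c < N" "idx k = Suc j"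
  shows "cell_low d N c i j \<le> y$k \<and> y$k \<le> cell_low d N c i j + cell_len d N c i j"
  using \<open>i \<le> T\<close>
proof (induction i)
  case 0
  have "y \<in> cbox 0 1" using assms(1) by (simp add: cell_def)
  then show ?case by (simp add: mem_box_cart)
next
  case (Suc i)
  then have IH: "cell_low d N c i j \<le> y$k \<and> y$k \<le> cell_low d N c i j + cell_len d N c i j"
    by simp
  show ?case
  proof (cases "j = i mod d")
    case True
    have "if odd (c div 2^i) then split_point d N c i \<le> y$k else y$k < split_point d N c i"
      using assms(1,4) Suc.prems True by (auto simp: cell_def)
    then show ?thesis
      using IH cell_Suc_axis[OF \<open>c < N\<close>, of d i] True by (auto split: if_splits)
  qed (use IH in simp)
qed

lemma box_subset_cell:
  assumes "c < N" "\<And>k. 0 < idx k"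
  shows "box (\<chi> k. cell_low d N c T (idx k - 1))
             (\<chi> k. cell_low d N c T (idx k - 1) + cell_len d N c T (idx k - 1))
           \<subseteq> cell d N T idx c" (is "box ?l ?u \<subseteq> _")
proof
  fix y assume y: "y \<in> box ?l ?u"
  have nested: "cell_low d N c i (idx k - 1) \<le> ?l$k \<and> ?u$k \<le> cell_low d N c i (idx k - 1) + cell_len d N c i (idx k - 1)"
    if "i \<le> T" for i k
    using cell_nested[OF assms(1) that] by simp
  have in_box: "?l$k < y$k \<and> y$k < ?u$k" for k
    using y by (simp add: mem_box_cart)
  have "y \<in> cbox 0 1"
    unfolding mem_box_cart
  proof
    fix k
    show "0$k \<le> y$k \<and> y$k \<le> 1$k" using in_box[of k] nested[of 0 k] by simp
  qed
  moreover have "if odd (c div 2^i) then split_point d N c i \<le> y$k else y$k < split_point d N c i"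
    if "i < T" "idx k = Suc (i mod d)" for i k
    using in_box[of k] nested[of "Suc i" k] that cell_Suc_axis[OF assms(1), of d i]
    by (auto simp: mem_box_cart split: if_splits)
  ultimately show "y \<in> cell d N T idx c"
    by (simp add: cell_def)
qed

lemma measure_between_box_cbox:
  fixes A :: "'a::euclidean_space set"
  assumes "box l u \<subseteq> A" "A \<subseteq> cbox l u" "A \<in> sets lborel"
  shows "measure lborel A = measure lborel (cbox l u)"
proof (rule antisym)
  show "measure lborel A \<le> measure lborel (cbox l u)"
    using assms by (intro measure_mono_fmeasurable) auto
  have "measure lborel (box l u) \<le> measure lborel A"
    using assms emeasure_mono[OF assms(2), of lborel]
    by (intro measure_mono_fmeasurable) (auto intro!: fmeasurableI le_less_trans[OF _ emeasure_lborel_cbox_finite])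
  then show "measure lborel (cbox l u) \<le> measure lborel A"
    by (simp add: measure_lborel_box_eq measure_lborel_cbox_eq)
qed

lemma measure_cell:
  fixes idx :: "'n::finite \<Rightarrow> nat"
  assumes idx: "bij_betw idx UNIV {1..d}" and "c < N" "N \<le> 2^T"
  shows "measure lborel (cell d N T idx c) = 1 / N"
proof -
  define l u :: "real^'n"
    where "l = (\<chi> k. cell_low d N c T (idx k - 1))"
      and "u = (\<chi> k. cell_low d N c T (idx k - 1) + cell_len d N c T (idx k - 1))"
  note axis = idx_axis[OF idx]
  have idx_pos: "0 < idx k" for k
    using axis(2)[of k] by linarith
  have "0 < d"
    using axis(3)[of undefined] by simp
  have "box l u \<subseteq> cell d N T idx c"
    unfolding l_def u_def by (rule box_subset_cell[OF \<open>c < N\<close> idx_pos])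
  moreover have "cell d N T idx c \<subseteq> cbox l u"
  proof
    fix y assume "y \<in> cell d N T idx c"
    then have "l$k \<le> y$k \<and> y$k \<le> u$k" for k
      using cell_coord_bounds[of y d N T idx c T k "idx k - 1"] idx_pos[of k] \<open>c < N\<close>
      by (simp add: l_def u_def)
    then show "y \<in> cbox l u" by (simp add: mem_box_cart)
  qed
  ultimately have "measure lborel (cell d N T idx c) = measure lborel (cbox l u)"
    using cell_borel by (intro measure_between_box_cbox) auto
  also have "\<dots> = (\<Prod>k\<in>UNIV. cell_len d N c T (idx k - 1))"
    using cell_len_nonneg[of d N c T] content_cbox_cart[of l u]
    by (simp add: l_def u_def interval_eq_empty_cart not_less)
  also have "\<dots> = (\<Prod>j<d. cell_len d N c T j)"
    using prod.reindex_bij_betw[OF axis(1)] by simp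
  also have "\<dots> = 1 / N"
    using cell_len_prod \<open>0 < d\<close> assms residue_count_eq_1 by simp
  finally show ?thesis .
qed

lemma cell_disjoint:
  assumes idx: "bij_betw idx UNIV {1..d}" and "c \<noteq> c'" "c < 2^T" "c' < 2^T"
  shows "cell d N T idx c \<inter> cell d N T idx c' = {}"
proof -
  obtain i where i: "i < T" "c mod 2^i = c' mod 2^i" "odd (c div 2^i) \<noteq> odd (c' div 2^i)"
    using first_differing_bit assms(2-4) by blast
  note axis = idx_axis[OF idx]
  have "i mod d < d"
    using axis(3)[of undefined] by simp
  then have "i mod d \<in> range (\<lambda>k. idx k - 1)"
    using bij_betw_imp_surj_on[OF axis(1)] by simp
  then obtain k where "idx k - 1 = i mod d" by auto
  then have k: "idx k = Suc (i mod d)"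
    using axis(2)[of k] by presburger
  show ?thesis
  proof (rule ccontr)
    assume "cell d N T idx c \<inter> cell d N T idx c' \<noteq> {}"
    then obtain y where y: "y \<in> cell d N T idx c" "y \<in> cell d N T idx c'" by blast
    have "if odd (c div 2^i) then split_point d N c i \<le> y$k else y$k < split_point d N c i"
      using y(1) i(1) k unfolding cell_def by blast
    moreover have "if odd (c' div 2^i) then split_point d N c' i \<le> y$k else y$k < split_point d N c' i"
      using y(2) i(1) k unfolding cell_def by blast
    ultimately show False
      using i(3) split_point_mod_cong[OF i(2), of d N] by (auto split: if_splits)
  qed
qed

lemma cells_disjoint_family:
  assumes "bij_betw idx UNIV {1..d}" "N \<le> 2^T"
  shows "disjoint_family_on (\<lambda>n. cell d N T idx (n - 1)) {1..N}"
  unfolding disjoint_family_on_def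
proof (intro ballI impI)
  fix m n assume "m \<in> {1..N}" "n \<in> {1..N}" "m \<noteq> n"
  then have "m - 1 \<noteq> n - 1" "m - 1 < N" "n - 1 < N" by auto
  then have "m - 1 \<noteq> n - 1" "m - 1 < 2^T" "n - 1 < 2^T" using assms(2) by linarith+
  then show "cell d N T idx (m - 1) \<inter> cell d N T idx (n - 1) = {}"
    by (rule cell_disjoint[OF assms(1)])
qed

lemma measure_unit_cube_cart: "measure lborel (cbox 0 1 :: (real^'n::finite) set) = 1"
proof -
  have "cbox 0 1 \<noteq> ({} :: (real^'n) set)"
    by (simp add: interval_eq_empty_cart)
  then show ?thesis
    using content_cbox_cart[of "0 :: real^'n" 1] by simp
qed

lemma measure_Diff_disjoint_UN_eq_0:
  assumes "finite I" "disjoint_family_on A I" "\<And>i. i \<in> I \<Longrightarrow> A i \<in> sets M"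
    and "\<And>i. i \<in> I \<Longrightarrow> A i \<subseteq> S" "S \<in> sets M" "emeasure M S \<noteq> \<infinity>"
    and "(\<Sum>i\<in>I. measure M (A i)) = measure M S"
  shows "measure M (S - (\<Union>i\<in>I. A i)) = 0"
proof -
  have "emeasure M (A i) \<noteq> \<infinity>" if "i \<in> I" for i
    using emeasure_mono[OF assms(4,5)] assms(6) that by (metis infinity_ennreal_def top.extremum_uniqueI)
  then have "measure M (\<Union>i\<in>I. A i) = measure M S"
    using assms by (simp add: measure_finite_Union image_subset_iff)
  moreover have "(\<Union>i\<in>I. A i) \<in> sets M" using assms(1,3) by blast
  ultimately show ?thesis
    using assms by (simp add: measure_Diff UN_least)
qed

section \<open>Comparison with the dyadic boxes\<close>

text \<open>The number of levels i' < i with i' mod d = j, i.e. of cuts perpendicular to axis j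
  above level i.\<close>
definition nsplits :: "nat \<Rightarrow> nat \<Rightarrow> nat \<Rightarrow> nat" where
  "nsplits d j i = (i + d - 1 - j) div d"

lemma nsplits_eq:
  assumes "j < d" "r < d"
  shows "nsplits d j (d * q + r) = q + (if j < r then 1 else 0)"
proof -
  have "nsplits d j (d * q + r) = ((r + d - 1 - j) + q * d) div d"
    unfolding nsplits_def using assms by (simp add: algebra_simps)
  also have "\<dots> = q + (r + d - 1 - j) div d"
    by (rule div_mult_self1) (use assms in simp)
  also have "(r + d - 1 - j) div d = (if j < r then 1 else 0)"
    using assms by (intro div_nat_eqI) auto
  finally show ?thesis .
qed

lemma nsplits_0: "j < d \<Longrightarrow> nsplits d j 0 = 0"
  by (simp add: nsplits_def)

lemma nsplits_at: "j < d \<Longrightarrow> nsplits d j (d * q + j) = q"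
  using nsplits_eq[of j d j q] by simp

lemma nsplits_Suc:
  assumes "j < d"
  shows "nsplits d j (Suc i) = nsplits d j i + (if i mod d = j then 1 else 0)"
proof -
  have "0 < d" using assms by simp
  define q r where "q = i div d" and "r = i mod d"
  have i: "i = d * q + r" and "r < d" using \<open>0 < d\<close> by (simp_all add: q_def r_def)
  have before: "nsplits d j i = q + (if j < r then 1 else 0)"
    using nsplits_eq[OF assms \<open>r < d\<close>] i by simp
  show ?thesis
  proof (cases "Suc r < d")
    case True
    have "nsplits d j (Suc i) = q + (if j < Suc r then 1 else 0)"
      using nsplits_eq[OF assms True] i by simp
    then show ?thesis using before by (auto simp: r_def[symmetric])
  next
    case False
    then have "Suc i = d * Suc q + 0" "r = d - 1" using i \<open>r < d\<close> by simp_all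
    then have "nsplits d j (Suc i) = Suc q"
      using nsplits_eq[OF assms \<open>0 < d\<close>, of "Suc q"] by simp
    then show ?thesis using before assms \<open>r = d - 1\<close> by (auto simp: r_def[symmetric])
  qed
qed

lemma nsplits_level:
  assumes "j < d" "i mod d = j"
  shows "d * nsplits d j i + j = i"
  using nsplits_at[OF assms(1), of "i div d"] div_mult_mod_eq[of i d] assms(2)
  by (simp add: mult.commute)

text \<open>Bit d k + j of c is binary digit k + 1 of coordinate j of x_(c+1), so this is the lower
  corner along axis j of the dyadic box of side 2^-(nsplits d j i) containing x_(c+1).\<close>
definition dyadic_low :: "nat \<Rightarrow> nat \<Rightarrow> nat \<Rightarrow> nat \<Rightarrow> real" where
  "dyadic_low d c j i = (\<Sum>k<nsplits d j i. real (c div 2^(d * k + j) mod 2) / 2^(k + 1))"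

lemma dyadic_low_Suc:
  assumes "j < d"
  shows "dyadic_low d c j (Suc i) = dyadic_low d c j i +
    (if i mod d = j then real (c div 2^i mod 2) / 2^(nsplits d j i + 1) else 0)"
  using nsplits_Suc[OF assms, of i] nsplits_level[OF assms, of i]
  by (simp add: dyadic_low_def)

lemma binary_series_bounds:
  fixes b :: "nat \<Rightarrow> real"
  assumes "\<And>k. 0 \<le> b k" "\<And>k. b k \<le> 1"
  shows "(\<Sum>k<K. b k / 2^(k + 1)) \<le> (\<Sum>k. b k / 2^(k + 1))"
    and "(\<Sum>k. b k / 2^(k + 1)) \<le> (\<Sum>k<K. b k / 2^(k + 1)) + 1 / 2^K"
proof -
  define f where "f k = b k / 2^(k + 1)" for k
  have geom: "(\<lambda>k. 1 / 2^(k + 1) :: real) sums 1"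
    using power_half_series by (simp add: power_one_over)
  have f_le: "f k \<le> 1 / 2^(k + 1)" for k
    using assms(2) by (simp add: f_def divide_right_mono)
  have "summable f"
    using assms(1) f_le by (intro summable_comparison_test[OF _ sums_summable[OF geom]]) (auto simp: f_def)
  then have split: "suminf f = (\<Sum>n. f (n + K)) + (\<Sum>k<K. f k)"
    and tail: "summable (\<lambda>n. f (n + K))"
    by (simp_all add: suminf_split_initial_segment summable_iff_shift)
  have "0 \<le> (\<Sum>n. f (n + K))"
    using tail assms(1) by (intro suminf_nonneg) (auto simp: f_def)
  then show "(\<Sum>k<K. f k) \<le> suminf f"
    using split by linarith
  have "f (n + K) \<le> 1 / 2^K * (1 / 2^(n + 1))" for n
    using f_le[of "n + K"] by (simp add: power_add mult_ac)
  then have "(\<Sum>n. f (n + K)) \<le> (\<Sum>n. 1 / 2^K * (1 / 2^(n + 1)))"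
    using tail summable_mult[OF sums_summable[OF geom], of "1 / 2^K"] by (intro suminf_le) auto
  also have "\<dots> = 1 / 2^K"
    using sums_unique[OF geom] suminf_mult[OF sums_summable[OF geom], of "1 / 2^K"] by simp
  finally show "suminf f \<le> (\<Sum>k<K. f k) + 1 / 2^K"
    using split by linarith
qed

lemma dyadic_coord_eq:
  assumes "j < d"
  shows "dyadic_coord d (Suc j) (c + 1) = (\<Sum>k. real (c div 2^(d * k + j) mod 2) / 2^(k + 1))"
proof -
  have "bitj (Suc j) (digit (2^d) k c) = c div 2^(d * k + j) mod 2" for k
  proof -
    have "(2::nat)^d = 2^j * 2^(d - j)" using assms by (simp add: power_add[symmetric])
    then have "c div 2^(d * k) mod 2^d div 2^j = c div 2^(d * k) div 2^j mod 2^(d - j)"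
      by (simp add: mod_mult2_eq)
    moreover have "(2::nat) dvd 2^(d - j)" using assms by simp
    ultimately show ?thesis
      by (simp add: bitj_def digit_def power_mult mod_mod_cancel div_mult2_eq power_add)
  qed
  then show ?thesis by (simp add: dyadic_coord_def)
qed

lemma dyadic_coord_bounds:
  assumes "j < d"
  shows "dyadic_low d c j i \<le> dyadic_coord d (Suc j) (c + 1)"
    and "dyadic_coord d (Suc j) (c + 1) \<le> dyadic_low d c j i + 1 / 2^nsplits d j i"
proof -
  have "real (c div 2^(d * k + j) mod 2) \<le> 1" for k
    using mod_less_divisor[of 2 "c div 2^(d * k + j)"] by linarith
  from binary_series_bounds[of "\<lambda>k. real (c div 2^(d * k + j) mod 2)", OF _ this]
  show "dyadic_low d c j i \<le> dyadic_coord d (Suc j) (c + 1)"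
    and "dyadic_coord d (Suc j) (c + 1) \<le> dyadic_low d c j i + 1 / 2^nsplits d j i"
    unfolding dyadic_coord_eq[OF assms] dyadic_low_def by simp_all
qed

text \<open>With K = nsplits d j i this is 2^-K times 2^(d (K - 1) + j) / N, the reciprocal of the
  expected number of indices in a cell at the level d (K - 1) + j of the last cut
  perpendicular to axis j.\<close>
definition split_error :: "nat \<Rightarrow> nat \<Rightarrow> nat \<Rightarrow> nat \<Rightarrow> real" where
  "split_error d N j i = 2^(d * nsplits d j i + j) / (2^d * 2^nsplits d j i * N)"

lemma split_error_cut:
  assumes "2 \<le> d" "j < d" "i mod d = j"
  shows "split_error d N j (Suc i) = 1 / 2^nsplits d j i * 2^i / (2 * real N)"
    and "split_error d N j i \<le> split_error d N j (Suc i) / 2"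
proof -
  define K where "K = nsplits d j i"
  have level: "d * K + j = i" and K_Suc: "nsplits d j (Suc i) = K + 1"
    using nsplits_level[OF assms(2,3)] nsplits_Suc[OF assms(2), of i] assms(3) by (simp_all add: K_def)
  have "split_error d N j (Suc i) = 2^(d * (K + 1) + j) / (2^d * 2^(K + 1) * N)"
    by (simp add: split_error_def K_Suc)
  also have "\<dots> = 1 / 2^K * 2^(d * K + j) / (2 * real N)"
    by (simp add: power_add field_simps)
  finally show new: "split_error d N j (Suc i) = 1 / 2^nsplits d j i * 2^i / (2 * real N)"
    by (simp only: level flip: K_def)
  have "split_error d N j i = 2^i / (2^d * 2^K * real N)"
    by (simp add: split_error_def level flip: K_def)
  then have "split_error d N j i = 2 / 2^d * split_error d N j (Suc i)"
    by (simp add: new K_def)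
  moreover have "(4::real) \<le> 2^d" using power_increasing[OF assms(1), of "2::real"] by simp
  moreover have "0 \<le> split_error d N j (Suc i)" by (simp add: new)
  ultimately show "split_error d N j i \<le> split_error d N j (Suc i) / 2"
    using mult_right_mono[of "2 / 2^d" "1/2" "split_error d N j (Suc i)"] by (simp add: divide_le_eq)
qed

lemma share_perturbation:
  fixes l s e n m :: real
  assumes "\<bar>l - s\<bar> \<le> e" "0 \<le> s" "8 \<le> n" "0 \<le> m" "\<bar>2 * m - n\<bar> \<le> 1" "s / (2 * n) \<le> 8/7 * e"
  shows "\<bar>l * (m / n) - s / 2\<bar> \<le> 2 * e"
proof -
  define q where "q = m / n"
  have "0 < n" "0 \<le> q" using assms(3,4) by (simp_all add: q_def)
  have "q - 1/2 = (2 * m - n) / (2 * n)" using \<open>0 < n\<close> by (simp add: q_def field_simps)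
  then have q_err: "\<bar>q - 1/2\<bar> \<le> 1 / (2 * n)"
    using assms(5) \<open>0 < n\<close> by (simp add: abs_div divide_right_mono)
  moreover have "1 / (2 * n) \<le> 1/16" using assms(3) by (simp add: field_simps)
  ultimately have "q \<le> 9/16" by linarith
  have "\<bar>l * q - s / 2\<bar> = \<bar>(l - s) * q + s * (q - 1/2)\<bar>" by (simp add: algebra_simps)
  also have "\<dots> \<le> \<bar>l - s\<bar> * q + s * \<bar>q - 1/2\<bar>"
    using \<open>0 \<le> q\<close> assms(2) by (metis abs_mult abs_of_nonneg abs_triangle_ineq)
  also have "\<dots> \<le> e * (9/16) + s * (1 / (2 * n))"
    using assms(1,2) \<open>0 \<le> q\<close> \<open>q \<le> 9/16\<close> q_err
    by (intro add_mono mult_mono mult_left_mono) auto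
  finally show ?thesis using assms(1,6) by (simp add: q_def)
qed

lemma cell_dyadic_error_Suc:
  assumes "2 \<le> d" "j < d" "i mod d = j" "8 * 2^i \<le> N"
    and len: "\<bar>cell_len d N c i j - 1 / 2^nsplits d j i\<bar> \<le> 2 * split_error d N j i"
    and low: "\<bar>cell_low d N c i j - dyadic_low d c j i\<bar> \<le> 4 * split_error d N j i"
  shows "\<bar>cell_len d N c (Suc i) j - 1 / 2^nsplits d j (Suc i)\<bar> \<le> 2 * split_error d N j (Suc i)"
    and "\<bar>cell_low d N c (Suc i) j - dyadic_low d c j (Suc i)\<bar> \<le> 4 * split_error d N j (Suc i)"
proof -
  define s e n where "s = (1 / 2^nsplits d j i :: real)"
    and "e = split_error d N j (Suc i)" and "n = residue_count N i c"
  note e_eq = split_error_cut(1)[OF assms(1-3), of N, folded s_def e_def]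
  note old_error = split_error_cut(2)[OF assms(1-3), of N, folded e_def]
  have n_ge: "8 \<le> real n" and "1 / n \<le> 8/7 * 2^i / N"
    using residue_count_large[OF assms(4), of c] by (simp_all add: n_def)
  then have "s * (1 / n) / 2 \<le> s * (8/7 * 2^i / N) / 2"
    by (intro divide_right_mono mult_left_mono) (simp_all add: s_def)
  then have "s / (2 * real n) \<le> 8/7 * e"
    by (simp add: e_eq)
  from share_perturbation[OF _ _ n_ge _ _ this] halving_error[of n]
  have share_error: "\<bar>l * (real m / n) - s / 2\<bar> \<le> 2 * e"
    if "\<bar>l - s\<bar> \<le> e" "m = (n + 1) div 2 \<or> m = n div 2" for l m
    using that by (auto simp: s_def)
  have len_error: "\<bar>cell_len d N c i j - s\<bar> \<le> e"
    using len old_error by (simp add: s_def)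
  have "residue_count N (Suc i) c = (n + 1) div 2 \<or> residue_count N (Suc i) c = n div 2"
    by (simp add: residue_count_Suc n_def)
  then have "\<bar>cell_len d N c i j * (real (residue_count N (Suc i) c) / n) - s / 2\<bar> \<le> 2 * e"
    by (rule share_error[OF len_error])
  moreover have "cell_len d N c (Suc i) j = cell_len d N c i j * (real (residue_count N (Suc i) c) / n)"
    using assms(3) by (simp add: n_def)
  moreover have "1 / 2^nsplits d j (Suc i) = s / 2"
    using nsplits_Suc[OF assms(2), of i] assms(3) by (simp add: s_def)
  ultimately show "\<bar>cell_len d N c (Suc i) j - 1 / 2^nsplits d j (Suc i)\<bar> \<le> 2 * e"
    by simp
  show "\<bar>cell_low d N c (Suc i) j - dyadic_low d c j (Suc i)\<bar> \<le> 4 * e"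
  proof (cases "odd (c div 2^i)")
    case True
    have "cell_low d N c (Suc i) j = cell_low d N c i j + cell_len d N c i j * (real ((n + 1) div 2) / n)"
      using True assms(3) by (simp add: n_def residue_count_Suc_mod)
    moreover have "dyadic_low d c j (Suc i) = dyadic_low d c j i + s / 2"
      using True assms(3) dyadic_low_Suc[OF assms(2), of c i] by (simp add: s_def odd_iff_mod_2_eq_one)
    ultimately show ?thesis
      using share_error[OF len_error, of "(n + 1) div 2"] low old_error by simp
  next
    case False
    have "0 \<le> e" by (simp add: e_eq s_def)
    then show ?thesis
      using False low old_error assms(3) dyadic_low_Suc[OF assms(2), of c i]
      by (simp add: even_iff_mod_2_eq_zero)
  qed
qed

lemma cell_dyadic_error:
  assumes "2 \<le> d" "j < d" "\<And>i'. i' < i \<Longrightarrow> i' mod d = j \<Longrightarrow> 8 * 2^i' \<le> N"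
  shows "\<bar>cell_len d N c i j - 1 / 2^nsplits d j i\<bar> \<le> 2 * split_error d N j i \<and>
    \<bar>cell_low d N c i j - dyadic_low d c j i\<bar> \<le> 4 * split_error d N j i"
  using assms(3)
proof (induction i)
  case 0
  then show ?case
    using assms(2) by (simp add: nsplits_0 dyadic_low_def split_error_def)
next
  case (Suc i)
  then have IH: "\<bar>cell_len d N c i j - 1 / 2^nsplits d j i\<bar> \<le> 2 * split_error d N j i \<and>
    \<bar>cell_low d N c i j - dyadic_low d c j i\<bar> \<le> 4 * split_error d N j i"
    by simp
  show ?case
  proof (cases "i mod d = j")
    case True
    then show ?thesis
      using cell_dyadic_error_Suc[OF assms(1,2) True] Suc.prems IH by simp
  next
    case False
    then show ?thesis
      using IH nsplits_Suc[OF assms(2), of i] dyadic_low_Suc[OF assms(2), of c i]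
      by (simp add: split_error_def)
  qed
qed

section \<open>The radius bound\<close>

lemma radius_estimate_scaled:
  fixes w Q :: real
  assumes "w > 0" "w < 4" "0 \<le> Q" "Q \<le> 1/8" "Q * w^d \<le> 1/2" "2 \<le> d"
  shows "w + 6 * w * Q \<le> 6"
proof (cases "w \<le> 17/5")
  case True
  have "6 * w * Q \<le> 6 * w * (1/8)" using assms by (intro mult_left_mono) auto
  then show ?thesis using True by linarith
next
  case False
  then have "w^2 \<le> w^d" by (intro power_increasing[OF assms(6)]) simp
  then have "Q * w^2 \<le> Q * w^d" using assms by (intro mult_left_mono) auto
  then have "Q * w^2 \<le> 1/2" using assms by linarith
  have "6 * w * Q = 6 * (Q * w^2) / w" using assms by (simp add: power2_eq_square field_simps)
  also have "\<dots> \<le> 6 * (1/2) / w" using \<open>Q * w^2 \<le> 1/2\<close> assms by (intro divide_right_mono) auto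
  also have "\<dots> \<le> 6 * (1/2) / (17/5)" using False by (intro divide_left_mono) auto
  also have "6 * (1/2) / (17/5) \<le> (1::real)" by simp
  finally show ?thesis using assms by linarith
qed

lemma radius_estimate:
  fixes d j q N :: nat
  assumes "2 \<le> d" "j < d" and lo: "8 * 2^(d * q + j) \<le> N" and hi: "N < 8 * 2^(d * (q + 1) + j)"
  shows "1 / 2^(q + 1) + 6 * (1 / 2^(q + 1)) * 2^(d * q + j) / N \<le> 6 / root d N"
proof -
  define u w Q where "u = root d N" and "w = u / 2^(q + 1)" and "Q = 2^(d * q + j) / real N"
  have "(0::nat) < 8 * 2^(d * q + j)" by simp
  then have "0 < N" using lo by linarith
  then have "0 < u" "u^d = N" using assms(1) by (simp_all add: u_def real_root_gt_zero)
  then have w_pow: "w^d = N / 2^(d * (q + 1))"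
    by (simp add: w_def power_divide power_mult[symmetric] power_add mult.commute)
  have "real N < real (8 * 2^(d * (q + 1) + j))"
    using hi by (simp only: of_nat_less_iff)
  then have "w^d < 2^(j + 3)"
    by (simp add: w_pow divide_less_eq power_add mult_ac)
  also have "(2::real)^(j + 3) \<le> 4^d"
    using assms(1,2) power_increasing[of "j + 3" "2 * d" "2::real"] by (simp add: power_mult)
  finally have "w < 4" by (rule power_less_imp_less_base) simp
  have "real (8 * 2^(d * q + j)) \<le> real N"
    using lo by (simp only: of_nat_le_iff)
  then have "Q \<le> 1/8" using \<open>0 < N\<close> by (simp add: Q_def divide_le_eq)
  have "Q * w^d = 2^j / 2^d"
    using \<open>0 < N\<close> by (simp add: Q_def w_pow power_add algebra_simps)
  also have "\<dots> \<le> 1/2"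
    using power_increasing[of "j + 1" d "2::real"] assms(2) by (simp add: divide_le_eq)
  finally have "Q * w^d \<le> 1/2" .
  moreover have "0 < w" "0 \<le> Q" using \<open>0 < u\<close> by (simp_all add: w_def Q_def)
  ultimately have "w + 6 * w * Q \<le> 6"
    using radius_estimate_scaled[OF _ \<open>w < 4\<close> _ \<open>Q \<le> 1/8\<close> _ assms(1)] by blast
  have "1 / 2^(q + 1) + 6 * (1 / 2^(q + 1)) * 2^(d * q + j) / N = (w + 6 * w * Q) / u"
    using \<open>0 < u\<close> by (simp add: w_def Q_def field_simps)
  also have "\<dots> \<le> 6 / u"
    using \<open>0 < u\<close> \<open>w + 6 * w * Q \<le> 6\<close> by (simp add: divide_right_mono)
  finally show ?thesis by (simp add: u_def)
qed

lemma powr_neg_inverse_eq_root: "0 < d \<Longrightarrow> 0 \<le> x \<Longrightarrow> x powr (- 1 / real d) = 1 / root d x"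
  by (simp add: root_powr_inverse powr_minus_divide)

lemma one_le_six_div_root:
  fixes d j N :: nat
  assumes "2 \<le> d" "j < d" "0 < N" "N < 8 * 2^j"
  shows "1 \<le> 6 / root d N"
proof -
  have "(2::nat)^(j + 3) \<le> 2^(d + 2)" using assms(2) by (intro power_increasing) auto
  have "(4::nat) \<le> 3^d" using power_increasing[OF assms(1), of "3::nat"] by simp
  note \<open>N < 8 * 2^j\<close>
  also have "8 * 2^j \<le> (4::nat) * 2^d"
    using \<open>2^(j + 3) \<le> 2^(d + 2)\<close> by (simp add: power_add)
  also have "\<dots> \<le> 3^d * 2^d"
    using \<open>4 \<le> 3^d\<close> by simp
  also have "\<dots> = 6^d" by (simp flip: power_mult_distrib)
  finally have "real N \<le> 6^d" by (metis less_imp_le of_nat_less_iff of_nat_numeral of_nat_power)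
  then have "root d N \<le> root d (6^d)"
    using assms(1) by (intro real_root_le_mono) auto
  also have "\<dots> = 6" using assms(1) by (simp add: real_root_power_cancel)
  finally show ?thesis using assms(1,3) by (simp add: real_root_gt_zero)
qed

lemma exists_power_bracket:
  fixes b m N :: nat
  assumes "2 \<le> b" "0 < m" "m \<le> N"
  obtains q where "m * b^q \<le> N" "N < m * b^Suc q"
proof -
  have "N < 2^N" by (rule less_exp)
  also have "\<dots> \<le> b^N" using assms(1) by (rule power_mono) simp
  also have "\<dots> \<le> m * b^N" using assms(2) by simp
  finally obtain q where "\<not> N < m * b^q" "N < m * b^Suc q"
    using exists_least_lemma[of "\<lambda>q. N < m * b^q"] assms(3) by auto
  then show ?thesis using that not_less by blast
qed

lemma cell_coord_dist_le_error:
  assumes "2 \<le> d" "j < d" "c < N" "t \<le> T" "y \<in> cell d N T idx c" "idx k = Suc j"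
    and "\<And>i. i < t \<Longrightarrow> i mod d = j \<Longrightarrow> 8 * 2^i \<le> N"
  shows "\<bar>y$k - dyadic_coord d (Suc j) (c + 1)\<bar> \<le> 1 / 2^nsplits d j t + 6 * split_error d N j t"
proof -
  have "cell_low d N c t j \<le> y$k \<and> y$k \<le> cell_low d N c t j + cell_len d N c t j"
    by (rule cell_coord_bounds[OF assms(5,4,3,6)])
  moreover have "dyadic_low d c j t \<le> dyadic_coord d (Suc j) (c + 1)"
    and "dyadic_coord d (Suc j) (c + 1) \<le> dyadic_low d c j t + 1 / 2^nsplits d j t"
    by (rule dyadic_coord_bounds[OF assms(2)])+
  ultimately show ?thesis
    using cell_dyadic_error[OF assms(1,2,7), of t c] by linarith
qed

lemma cell_coord_dist_large:
  assumes "2 \<le> d" "j < d" "c < N" "N \<le> 2^T" "y \<in> cell d N T idx c" "idx k = Suc j"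
    and "8 * 2^j \<le> N"
  shows "\<bar>y$k - dyadic_coord d (Suc j) (c + 1)\<bar> \<le> 6 / root d N"
proof -
  have "2 \<le> (2::nat)^d" "0 < (8::nat) * 2^j"
    using power_increasing[of 1 d "2::nat"] assms(1) by simp_all
  then obtain q where "8 * 2^j * (2^d)^q \<le> N" "N < 8 * 2^j * (2^d)^Suc q"
    using assms(7) by (rule exists_power_bracket)
  then have lo: "8 * 2^(d * q + j) \<le> N" and hi: "N < 8 * 2^(d * (q + 1) + j)"
    by (simp_all add: power_mult[symmetric] power_add mult_ac)
  text \<open>Level t lies just below the last cut perpendicular to axis j at which the cells
    still hold at least eight indices.\<close>
  define t where "t = Suc (d * q + j)"
  have "(0::nat) < 2^(d * q + j)" by simp
  then have "(2::nat)^(d * q + j) < 2^T" using lo assms(4) by linarith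
  then have "t \<le> T" by (simp add: t_def)
  have "8 * 2^i \<le> N" if "i < t" for i
  proof -
    have "(2::nat)^i \<le> 2^(d * q + j)" using that by (intro power_increasing) (auto simp: t_def)
    then show ?thesis using lo by linarith
  qed
  then have "\<bar>y$k - dyadic_coord d (Suc j) (c + 1)\<bar> \<le> 1 / 2^nsplits d j t + 6 * split_error d N j t"
    using cell_coord_dist_le_error[OF assms(1-3) \<open>t \<le> T\<close> assms(5,6)] by blast
  also have "nsplits d j t = q + 1"
    using nsplits_Suc[OF assms(2), of "d * q + j"] nsplits_at[OF assms(2)] assms(2) by (simp add: t_def)
  then have "1 / 2^nsplits d j t + 6 * split_error d N j t
      = 1 / 2^(q + 1) + 6 * (1 / 2^(q + 1)) * 2^(d * q + j) / N"
    by (simp add: split_error_def power_add field_simps)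
  also have "\<dots> \<le> 6 / root d N"
    by (rule radius_estimate[OF assms(1,2) lo hi])
  finally show ?thesis .
qed

lemma cell_coord_dist:
  assumes "2 \<le> d" "j < d" "c < N" "N \<le> 2^T" "y \<in> cell d N T idx c" "idx k = Suc j"
  shows "\<bar>y$k - dyadic_coord d (Suc j) (c + 1)\<bar> \<le> 6 * real N powr (- 1 / real d)"
proof -
  have "\<bar>y$k - dyadic_coord d (Suc j) (c + 1)\<bar> \<le> 6 / root d N"
  proof (cases "N < 8 * 2^j")
    case True
    have "0 \<le> y$k \<and> y$k \<le> 1"
      using cell_coord_bounds[OF assms(5) _ assms(3,6), of 0] by simp
    moreover have "0 \<le> dyadic_coord d (Suc j) (c + 1) \<and> dyadic_coord d (Suc j) (c + 1) \<le> 1"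
      using dyadic_coord_bounds[OF assms(2), of c 0] by (simp add: dyadic_low_def nsplits_0[OF assms(2)])
    ultimately show ?thesis
      using one_le_six_div_root[OF assms(1,2) _ True] assms(3) by linarith
  qed (use cell_coord_dist_large[OF assms] in simp)
  then show ?thesis
    using powr_neg_inverse_eq_root[of d N] assms(1) by simp
qed

lemma dist_le_sqrt_card_mult:
  fixes x y :: "real^'n"
  assumes "\<And>k. \<bar>x$k - y$k\<bar> \<le> r"
  shows "dist x y \<le> sqrt CARD('n) * r"
proof -
  have "infnorm (x - y) \<le> r"
    unfolding infnorm_cart using assms by (auto intro!: cSup_least)
  then have "sqrt CARD('n) * infnorm (x - y) \<le> sqrt CARD('n) * r"
    by (rule mult_left_mono) simp
  moreover have "norm (x - y) \<le> sqrt CARD('n) * infnorm (x - y)"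
    using norm_le_infnorm[of "x - y"] by simp
  ultimately show ?thesis
    unfolding dist_norm by linarith
qed

lemma cell_subset_cball:
  fixes idx :: "'n::finite \<Rightarrow> nat"
  assumes "2 \<le> d" "d = CARD('n)" "bij_betw idx UNIV {1..d}" "c < N" "N \<le> 2^T"
  shows "cell d N T idx c \<subseteq> cball (dyadic_point d idx (c + 1)) (6 * sqrt d * real N powr (- 1 / real d))"
proof
  fix y assume y: "y \<in> cell d N T idx c"
  have "\<bar>dyadic_point d idx (c + 1) $ k - y$k\<bar> \<le> 6 * real N powr (- 1 / real d)" for k
  proof -
    define j where "j = idx k - 1"
    have "j < d" and "idx k = Suc j"
      unfolding j_def by (rule idx_axis(3)[OF assms(3)], rule idx_axis(2)[OF assms(3)])
    then show ?thesis
      using cell_coord_dist[OF assms(1) \<open>j < d\<close> assms(4,5) y] by (simp add: dyadic_point_def abs_minus_commute)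
  qed
  then have "dist (dyadic_point d idx (c + 1)) y \<le> sqrt CARD('n) * (6 * real N powr (- 1 / real d))"
    by (rule dist_le_sqrt_card_mult)
  then show "y \<in> cball (dyadic_point d idx (c + 1)) (6 * sqrt d * real N powr (- 1 / real d))"
    using assms(2) by (simp add: mult.assoc mult.left_commute)
qed

theorem theorem1p2:
  fixes idx :: "'n::finite \<Rightarrow> nat" and d N :: nat
  assumes "d = CARD('n)" and "d \<ge> 2"
    and "bij_betw idx UNIV {1..d}"
    and "N \<ge> 1"
  shows "\<exists>A :: nat \<Rightarrow> (real ^ 'n) set.
     (\<forall>n\<in>{1..N}. A n \<in> sets borel \<and> A n \<subseteq> cbox 0 1
        \<and> measure lborel (A n) = 1 / real N
        \<and> A n \<subseteq> cball (dyadic_point d idx n) (6 * sqrt (real d) * real N powr (- 1 / real d)))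
   \<and> disjoint_family_on A {1..N}
   \<and> measure lborel (cbox 0 1 - (\<Union>n\<in>{1..N}. A n)) = 0"
proof -
  note d = assms(1,2) and idx = assms(3)
  define A where "A n = cell d N N idx (n - 1)" for n
  have NT: "N \<le> 2^N" using less_exp[of N] by simp
  have cells: "A n \<in> sets borel \<and> A n \<subseteq> cbox 0 1 \<and> measure lborel (A n) = 1 / real N
      \<and> A n \<subseteq> cball (dyadic_point d idx n) (6 * sqrt (real d) * real N powr (- 1 / real d))"
    if "n \<in> {1..N}" for n
  proof -
    have "n - 1 < N" "n - 1 + 1 = n" using that by auto
    then show ?thesis
      using measure_cell[OF idx \<open>n - 1 < N\<close> NT] cell_subset_cball[OF d(2,1) idx \<open>n - 1 < N\<close> NT]
      by (simp add: A_def cell_borel cell_subset_cube)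
  qed
  moreover have disjoint: "disjoint_family_on A {1..N}"
    unfolding A_def by (rule cells_disjoint_family[OF idx NT])
  moreover have "measure lborel (cbox 0 1 - (\<Union>n\<in>{1..N}. A n)) = 0"
  proof (rule measure_Diff_disjoint_UN_eq_0[OF _ disjoint])
    show "(\<Sum>n\<in>{1..N}. measure lborel (A n)) = measure lborel (cbox 0 1 :: (real^'n) set)"
      using cells assms(4) by (simp add: measure_unit_cube_cart)
    show "emeasure lborel (cbox 0 1 :: (real^'n) set) \<noteq> \<infinity>"
      using emeasure_lborel_cbox_finite by (simp add: less_top)
  qed (use cells in auto)
  ultimately show ?thesis by blast
qed

end
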